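(* Let $N, P, M, K, C$ be positive integers with $M$ dividing $P$, and put $S = P/M$. Let $\mathbf{x}_1,\dots,\mathbf{x}_N \in \mathbb{R}^P$ be fixed data points. For a vector $\mathbf{v}\in\mathbb{R}^P$ built from $M$ blocks, write $[\mathbf{v}^1;\dots;\mathbf{v}^M]$ for the vertical concatenation of the blocks $\mathbf{v}^m \in \mathbb{R}^S$. Define the following three optimal values (each is the infimum of the objective over the indicated feasible set; in every case $\mathbf{R}$ ranges over real $P\times P$ matrices with $\mathbf{R}^T\mathbf{R} = \mathbf{I}$, and the constraints on codes are imposed for all $i\in\{1,\dots,N\}$, $m\in\{1,\dots,M\}$, $c\in\{1,\dots,C\}$): (CKM) $f^*_{\mathrm{ck},M,K} = \inf \sum_{i=1}^N \big\|\mathbf{x}_i - \mathbf{R}[\mathbf{D}^1\mathbf{b}_i^1;\dots;\mathbf{D}^M\mathbf{b}_i^M]\big\|_2^2$ over $\mathbf{R}$, matrices $\mathbf{D}^m\in\mathbb{R}^{S\times K}$, and vectors $\mathbf{b}_i^m\in\{0,1\}^K$ with $\|\mathbf{b}_i^m\|_1 = 1$. (ECKM) $f^*_{\mathrm{eck},M,K,C} = \inf \sum_{i=1}^N \big\|\mathbf{x}_i - \mathbf{R}[\mathbf{D}^1\mathbf{b}_i^1;\dots;\mathbf{D}^M\mathbf{b}_i^M]\big\|_2^2$ over $\mathbf{R}$, matrices $\mathbf{D}^m\in\mathbb{R}^{S\times K}$, and vectors $\mathbf{b}_i^m\in\mathbb{Z}_{\ge 0}^K$ with $\|\mathbf{b}_i^m\|_1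 = C$. (OCKM) $f^*_{\mathrm{ock},M,K,C} = \inf \sum_{i=1}^N \big\|\mathbf{x}_i - \mathbf{R}[\textstyle\sum_{c=1}^C\mathbf{D}^{1,c}\mathbf{b}_i^{1,c};\dots;\sum_{c=1}^C\mathbf{D}^{M,c}\mathbf{b}_i^{M,c}]\big\|_2^2$ over $\mathbf{R}$, matrices $\mathbf{D}^{m,c}\in\mathbb{R}^{S\times K}$, and vectors $\mathbf{b}_i^{m,c}\in\{0,1\}^K$ with $\|\mathbf{b}_i^{m,c}\|_1 = 1$. Then $f^*_{\mathrm{ock},M,K,C} \le f^*_{\mathrm{ck},M,K}$ and $f^*_{\mathrm{ock},M,K,C} \le f^*_{\mathrm{eck},M,K,C}$.
   Context: $\|\cdot\|_2$ is the Euclidean norm, $\|\cdot\|_1$ the $\ell_1$ norm, and $\mathbb{Z}_{\ge 0}$ the set of non-negative integers. These are the optimal distortion errors of Cartesian $K$-means (CKM), extended Cartesian $K$-means (ECKM), and optimized Cartesian $K$-means (OCKM), respectively. *)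

theory Defs
  imports Complex_Main
begin

(* Conventions: all indices are 0-based.  A vector in R^P is a function
   nat => real read on {0..<P}; a P x P matrix is nat => nat => real read on
   {0..<P} x {0..<P}.  Data: x i p = p-th coordinate of x_i (i < N, p < P).
   Block vector [v^1;...;v^M] with v^m in R^S: coordinate q (q < P = M*S)
   is coordinate (q mod S) of block (q div S). *)

definition orthogonal_mat :: "nat \<Rightarrow> (nat \<Rightarrow> nat \<Rightarrow> real) \<Rightarrow> bool" where
  "orthogonal_mat P R \<longleftrightarrow>
     (\<forall>i<P. \<forall>j<P. (\<Sum>k<P. R k i * R k j) = (if i = j then 1 else 0))"

definition distortion :: "nat \<Rightarrow> nat \<Rightarrow> (nat \<Rightarrow> nat \<Rightarrow> real) \<Rightarrow> (nat \<Rightarrow> nat \<Rightarrow> real)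
    \<Rightarrow> (nat \<Rightarrow> nat \<Rightarrow> real) \<Rightarrow> real" where
  "distortion N P x R y = (\<Sum>i<N. \<Sum>p<P. (x i p - (\<Sum>q<P. R p q * y i q))\<^sup>2)"

definition one_hot :: "nat \<Rightarrow> (nat \<Rightarrow> nat) \<Rightarrow> bool" where
  "one_hot K b \<longleftrightarrow> (\<forall>k<K. b k \<le> 1) \<and> (\<Sum>k<K. b k) = 1"

(* [D^1 b_i^1; ...; D^M b_i^M], D m s k = entry (s,k) of D^m (S x K),
   b i m k = k-th entry of b_i^m *)
definition ck_recon :: "nat \<Rightarrow> nat \<Rightarrow> (nat \<Rightarrow> nat \<Rightarrow> nat \<Rightarrow> real)
    \<Rightarrow> (nat \<Rightarrow> nat \<Rightarrow> nat \<Rightarrow> nat) \<Rightarrow> nat \<Rightarrow> nat \<Rightarrow> real" where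
  "ck_recon S K D b i q = (\<Sum>k<K. D (q div S) (q mod S) k * real (b i (q div S) k))"

(* [sum_c D^{1,c} b_i^{1,c}; ...], D m c s k, b i m c k *)
definition ock_recon :: "nat \<Rightarrow> nat \<Rightarrow> nat \<Rightarrow> (nat \<Rightarrow> nat \<Rightarrow> nat \<Rightarrow> nat \<Rightarrow> real)
    \<Rightarrow> (nat \<Rightarrow> nat \<Rightarrow> nat \<Rightarrow> nat \<Rightarrow> nat) \<Rightarrow> nat \<Rightarrow> nat \<Rightarrow> real" where
  "ock_recon S K C D b i q =
     (\<Sum>c<C. \<Sum>k<K. D (q div S) c (q mod S) k * real (b i (q div S) c k))"

definition f_ck :: "nat \<Rightarrow> nat \<Rightarrow> nat \<Rightarrow> nat \<Rightarrow> (nat \<Rightarrow> nat \<Rightarrow> real) \<Rightarrow> real" where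
  "f_ck N P M K x = Inf {distortion N P x R (ck_recon (P div M) K D b) | R D b.
      orthogonal_mat P R \<and> (\<forall>i<N. \<forall>m<M. one_hot K (b i m))}"

definition f_eck :: "nat \<Rightarrow> nat \<Rightarrow> nat \<Rightarrow> nat \<Rightarrow> nat \<Rightarrow> (nat \<Rightarrow> nat \<Rightarrow> real) \<Rightarrow> real" where
  "f_eck N P M K C x = Inf {distortion N P x R (ck_recon (P div M) K D b) | R D b.
      orthogonal_mat P R \<and> (\<forall>i<N. \<forall>m<M. (\<Sum>k<K. b i m k) = C)}"

definition f_ock :: "nat \<Rightarrow> nat \<Rightarrow> nat \<Rightarrow> nat \<Rightarrow> nat \<Rightarrow> (nat \<Rightarrow> nat \<Rightarrow> real) \<Rightarrow> real" where
  "f_ock N P M K C x = Inf {distortion N P x R (ock_recon (P div M) K C D b) | R D b.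
      orthogonal_mat P R \<and> (\<forall>i<N. \<forall>m<M. \<forall>c<C. one_hot K (b i m c))}"

end

theory Submission
  imports Defs
begin

text \<open>Every CKM configuration is an OCKM configuration: use the CKM codebooks as the first
  of the C codebooks, make the others zero, and repeat the codes. Every nonnegative integer
  code with 1-norm C is a sum of C one-hot codes (cut the prefix sums of the code into unit
  steps), so an ECKM configuration is an OCKM configuration with all C codebooks equal to the
  ECKM codebook. Hence the OCKM infimum ranges over a superset of the other two value sets.\<close>

definition ck_distortions :: "nat \<Rightarrow> nat \<Rightarrow> nat \<Rightarrow> nat \<Rightarrow> (nat \<Rightarrow> nat \<Rightarrow> real) \<Rightarrow> real set" where
  "ck_distortions N P M K x = {distortion N P x R (ck_recon (P div M) K D b) | R D b.
      orthogonal_mat P R \<and> (\<forall>i<N. \<forall>m<M. one_hot K (b i m))}"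

definition eck_distortions :: "nat \<Rightarrow> nat \<Rightarrow> nat \<Rightarrow> nat \<Rightarrow> nat \<Rightarrow> (nat \<Rightarrow> nat \<Rightarrow> real) \<Rightarrow> real set" where
  "eck_distortions N P M K C x = {distortion N P x R (ck_recon (P div M) K D b) | R D b.
      orthogonal_mat P R \<and> (\<forall>i<N. \<forall>m<M. (\<Sum>k<K. b i m k) = C)}"

definition ock_distortions :: "nat \<Rightarrow> nat \<Rightarrow> nat \<Rightarrow> nat \<Rightarrow> nat \<Rightarrow> (nat \<Rightarrow> nat \<Rightarrow> real) \<Rightarrow> real set" where
  "ock_distortions N P M K C x = {distortion N P x R (ock_recon (P div M) K C D b) | R D b.
      orthogonal_mat P R \<and> (\<forall>i<N. \<forall>m<M. \<forall>c<C. one_hot K (b i m c))}"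

lemma f_ck_eq_Inf: "f_ck N P M K x = Inf (ck_distortions N P M K x)"
  by (simp add: f_ck_def ck_distortions_def)

lemma f_eck_eq_Inf: "f_eck N P M K C x = Inf (eck_distortions N P M K C x)"
  by (simp add: f_eck_def eck_distortions_def)

lemma f_ock_eq_Inf: "f_ock N P M K C x = Inf (ock_distortions N P M K C x)"
  by (simp add: f_ock_def ock_distortions_def)

lemma sum_indicator_consecutive_intervals:
  fixes S :: "nat \<Rightarrow> nat"
  assumes "mono S" and "S 0 = 0" and "c < S K"
  shows "(\<Sum>k<K. of_bool (c \<in> {S k..<S (Suc k)})) = (1::nat)"
  using assms(3)
proof (induction K)
  case 0
  then show ?case using assms(2) by simp
next
  case (Suc K)
  show ?case
  proof (cases "c < S K")
    case True
    then show ?thesis using Suc by simp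
  next
    case False
    have "S (Suc k) \<le> S K" if "k < K" for k
      using that assms(1) by (simp add: monoD)
    then have "(\<Sum>k<K. of_bool (c \<in> {S k..<S (Suc k)})) = (0::nat)"
      using False by (intro sum.neutral) force
    then show ?thesis using False Suc.prems by simp
  qed
qed

lemma one_hot_decomposition:
  fixes b :: "nat \<Rightarrow> nat"
  assumes "(\<Sum>k<K. b k) = C"
  shows "\<exists>b'. (\<forall>c<C. one_hot K (b' c)) \<and> (\<forall>k<K. (\<Sum>c<C. b' c k) = b k)"
proof -
  define S where "S k = (\<Sum>j<k. b j)" for k
  have "mono S"
    by (rule monoI) (simp add: S_def sum_mono2)
  define b' where "b' c k = (of_bool (c \<in> {S k..<S (Suc k)}) :: nat)" for c k
  have "one_hot K (b' c)" if "c < C" for c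
  proof -
    have "c < S K" using that assms by (simp add: S_def)
    then show ?thesis
      using sum_indicator_consecutive_intervals[OF \<open>mono S\<close>]
      by (simp add: one_hot_def b'_def S_def)
  qed
  moreover have "(\<Sum>c<C. b' c k) = b k" if "k < K" for k
  proof -
    have "S (Suc k) \<le> C"
      using that assms \<open>mono S\<close> by (metis S_def Suc_leI monoD)
    then have "{..<C} \<inter> {c. c \<in> {S k..<S (Suc k)}} = {S k..<S (Suc k)}"
      by auto
    then show ?thesis
      by (simp add: b'_def sum.If_cases S_def)
  qed
  ultimately show ?thesis by blast
qed

lemma distortion_cong:
  assumes "\<And>i q. i < N \<Longrightarrow> q < P \<Longrightarrow> y i q = y' i q"
  shows "distortion N P x R y = distortion N P x R y'"
  unfolding distortion_def using assms by (intro sum.cong) auto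

lemma distortion_nonneg: "0 \<le> distortion N P x R y"
  unfolding distortion_def by (intro sum_nonneg) simp

lemma block_index_less:
  fixes M P q :: nat
  assumes "M dvd P" and "q < P"
  shows "q div (P div M) < M"
proof -
  have "q < M * (P div M)" using assms by simp
  then show ?thesis by (rule less_mult_imp_div_less)
qed

lemma ock_recon_first_codebook:
  assumes "C > 0"
  shows "ock_recon S K C (\<lambda>m c s k. if c = 0 then D m s k else 0) (\<lambda>i m c. b i m)
       = ck_recon S K D b"
  using assms unfolding ock_recon_def ck_recon_def
  by (intro ext, subst sum.swap) (simp add: sum_distrib_right[symmetric] sum.delta)

lemma ock_recon_shared_codebook:
  assumes "\<forall>k<K. (\<Sum>c<C. b' i (q div S) c k) = b i (q div S) k"
  shows "ock_recon S K C (\<lambda>m c. D m) b' i q = ck_recon S K D b i q"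
proof -
  have "ock_recon S K C (\<lambda>m c. D m) b' i q
      = (\<Sum>k<K. D (q div S) (q mod S) k * real (\<Sum>c<C. b' i (q div S) c k))"
    unfolding ock_recon_def by (subst sum.swap) (simp add: sum_distrib_left)
  also have "\<dots> = ck_recon S K D b i q"
    unfolding ck_recon_def using assms by simp
  finally show ?thesis .
qed

lemma orthogonal_mat_id: "orthogonal_mat P (\<lambda>i j. of_bool (i = j))"
  unfolding orthogonal_mat_def by (auto simp flip: of_bool_conj)

lemma ck_distortions_nonempty:
  assumes "K > 0"
  shows "ck_distortions N P M K x \<noteq> {}"
proof -
  have "one_hot K (\<lambda>k. of_bool (k = 0))"
    using assms by (simp add: one_hot_def)
  then have "distortion N P x (\<lambda>i j. of_bool (i = j)) (ck_recon (P div M) K (\<lambda>_ _ _. 0)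
      (\<lambda>_ _ k. of_bool (k = 0))) \<in> ck_distortions N P M K x"
    unfolding ck_distortions_def using orthogonal_mat_id by blast
  then show ?thesis by blast
qed

lemma eck_distortions_nonempty:
  assumes "K > 0"
  shows "eck_distortions N P M K C x \<noteq> {}"
proof -
  have "(\<Sum>k<K. (if k = 0 then C else 0)) = C"
    using assms by simp
  then have "distortion N P x (\<lambda>i j. of_bool (i = j)) (ck_recon (P div M) K (\<lambda>_ _ _. 0)
      (\<lambda>_ _ k. if k = 0 then C else 0)) \<in> eck_distortions N P M K C x"
    unfolding eck_distortions_def using orthogonal_mat_id by blast
  then show ?thesis by blast
qed

lemma ck_distortions_subset_ock:
  assumes "C > 0"
  shows "ck_distortions N P M K x \<subseteq> ock_distortions N P M K C x"
proof
  fix v assume "v \<in> ck_distortions N P M K x"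
  then obtain R D b where v: "v = distortion N P x R (ck_recon (P div M) K D b)"
    and R: "orthogonal_mat P R" and b: "\<forall>i<N. \<forall>m<M. one_hot K (b i m)"
    unfolding ck_distortions_def by blast
  let ?D = "\<lambda>m c s k. if c = 0 then D m s k else 0"
  have "v = distortion N P x R (ock_recon (P div M) K C ?D (\<lambda>i m c. b i m))"
    using v ock_recon_first_codebook[OF assms] by simp
  then show "v \<in> ock_distortions N P M K C x"
    unfolding ock_distortions_def using R b by blast
qed

lemma eck_distortions_subset_ock:
  assumes "M dvd P"
  shows "eck_distortions N P M K C x \<subseteq> ock_distortions N P M K C x"
proof
  fix v assume "v \<in> eck_distortions N P M K C x"
  then obtain R D b where v: "v = distortion N P x R (ck_recon (P div M) K D b)"
    and R: "orthogonal_mat P R" and b: "\<forall>i<N. \<forall>m<M. (\<Sum>k<K. b i m k) = C"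
    unfolding eck_distortions_def by blast
  define b' where "b' i m = (SOME bb. (\<forall>c<C. one_hot K (bb c)) \<and>
      (\<forall>k<K. (\<Sum>c<C. bb c k) = b i m k))" for i m
  have b': "(\<forall>c<C. one_hot K (b' i m c)) \<and> (\<forall>k<K. (\<Sum>c<C. b' i m c k) = b i m k)"
    if "i < N" and "m < M" for i m
  proof -
    have "(\<Sum>k<K. b i m k) = C" using b that by blast
    then show ?thesis unfolding b'_def by (rule someI_ex[OF one_hot_decomposition])
  qed
  have "ock_recon (P div M) K C (\<lambda>m c. D m) b' i q = ck_recon (P div M) K D b i q"
    if "i < N" and "q < P" for i q
    using b'[OF that(1) block_index_less[OF assms that(2)]]
    by (intro ock_recon_shared_codebook) blast
  then have "v = distortion N P x R (ock_recon (P div M) K C (\<lambda>m c. D m) b')"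
    unfolding v by (intro distortion_cong) simp
  moreover have "\<forall>i<N. \<forall>m<M. \<forall>c<C. one_hot K (b' i m c)"
    using b' by blast
  ultimately show "v \<in> ock_distortions N P M K C x"
    unfolding ock_distortions_def using R by blast
qed

theorem theorem1:
  fixes N P M K C :: nat and x :: "nat \<Rightarrow> nat \<Rightarrow> real"
  assumes "N > 0" and "P > 0" and "M > 0" and "K > 0" and "C > 0" and "M dvd P"
  shows "f_ock N P M K C x \<le> f_ck N P M K x \<and> f_ock N P M K C x \<le> f_eck N P M K C x"
proof
  have bdd: "bdd_below (ock_distortions N P M K C x)"
    unfolding ock_distortions_def bdd_below_def using distortion_nonneg by blast
  show "f_ock N P M K C x \<le> f_ck N P M K x"
    unfolding f_ock_eq_Inf f_ck_eq_Inf
    using ck_distortions_nonempty[OF \<open>K > 0\<close>] bdd ck_distortions_subset_ock[OF \<open>C > 0\<close>]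
    by (rule cInf_superset_mono)
  show "f_ock N P M K C x \<le> f_eck N P M K C x"
    unfolding f_ock_eq_Inf f_eck_eq_Inf
    using eck_distortions_nonempty[OF \<open>K > 0\<close>] bdd eck_distortions_subset_ock[OF \<open>M dvd P\<close>]
    by (rule cInf_superset_mono)
qed

end
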